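(* Let $k\ge 3$ be an integer and $F$ a field admitting a primitive $(k-1)$-th root of unity with $\mathrm{char}(F)\nmid k$. Let $X$ be a finite poset, $B$ an associative $F$-algebra, and $\varphi:I(X,F)\to B$ an $F$-linear map with $\varphi(P_k(I(X,F)))\subseteq P_k(B)$. Put $u=\varphi(\delta)$. Then $u$ commutes with every element of $\varphi(I(X,F))$, $\varphi(I(X,F))\subseteq u^{k-1}Bu^{k-1}$, and $\varphi$, regarded as a map $I(X,F)\to(u^{k-1}Bu^{k-1},\bullet_u)$, is a Jordan homomorphism.
   Context: $I(X,F)$ is the incidence algebra of the locally finite poset $X$ over $F$ (functions $f:X\times X\to F$ vanishing unless $x\le y$, with product $(fg)(x,y)=\sum_{x\le z\le y}f(x,z)g(z,y)$), with identity $\delta$ ($\delta(x,y)=1$ if $x=y$, $0$ otherwise). $P_k(A)=\{a: a^k=a\}$. For a $k$-potent $u$ of an associative algebra $B$, $u^{k-1}$ is idempotent and $u^{k-1}Bu^{k-1}$ is an associative algebra with the product $a\bullet_u b=au^{k-2}b$ (with identity $u$). A Jordan homomorphism $\varphi:A\to C$ of associative algebras is a linear map with $\varphi(a^2)=\varphi(a)^2$ and $\varphi(aba)=\varphi(a)\varphi(b)\varphi(a)$ for all $a,b$ (products taken in the respective algebras). *)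

theory Defs
  imports Complex_Main
begin

definition incidence_alg :: "('x::order \<Rightarrow> 'x \<Rightarrow> 'f::field) set" where
  "incidence_alg = {f. \<forall>x y. \<not> x \<le> y \<longrightarrow> f x y = 0}"

definition inc_mult :: "('x::{order,finite} \<Rightarrow> 'x \<Rightarrow> 'f::field) \<Rightarrow> ('x \<Rightarrow> 'x \<Rightarrow> 'f) \<Rightarrow> ('x \<Rightarrow> 'x \<Rightarrow> 'f)" where
  "inc_mult f g = (\<lambda>x y. \<Sum>z\<in>{z. x \<le> z \<and> z \<le> y}. f x z * g z y)"

definition inc_delta :: "'x::order \<Rightarrow> 'x \<Rightarrow> 'f::field" where
  "inc_delta = (\<lambda>x y. if x = y then 1 else 0)"

definition inc_smult :: "'f::field \<Rightarrow> ('x \<Rightarrow> 'x \<Rightarrow> 'f) \<Rightarrow> ('x \<Rightarrow> 'x \<Rightarrow> 'f)" where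
  "inc_smult c f = (\<lambda>x y. c * f x y)"

definition inc_add :: "('x \<Rightarrow> 'x \<Rightarrow> 'f::field) \<Rightarrow> ('x \<Rightarrow> 'x \<Rightarrow> 'f) \<Rightarrow> ('x \<Rightarrow> 'x \<Rightarrow> 'f)" where
  "inc_add f g = (\<lambda>x y. f x y + g x y)"

primrec inc_pow :: "('x::{order,finite} \<Rightarrow> 'x \<Rightarrow> 'f::field) \<Rightarrow> nat \<Rightarrow> ('x \<Rightarrow> 'x \<Rightarrow> 'f)" where
  "inc_pow f 0 = inc_delta"
| "inc_pow f (Suc n) = inc_mult f (inc_pow f n)"

text \<open>Positive powers in a (possibly non-unital) associative ring;
  bpow a n = a^n for n \<ge> 1 (the value at n = 0 is irrelevant and set to 0).\<close>

fun bpow :: "'b::ring \<Rightarrow> nat \<Rightarrow> 'b" where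
  "bpow a 0 = 0"
| "bpow a (Suc 0) = a"
| "bpow a (Suc (Suc n)) = a * bpow a (Suc n)"

definition F_algebra :: "('f::field \<Rightarrow> 'b::ring \<Rightarrow> 'b) \<Rightarrow> bool" where
  "F_algebra sm \<longleftrightarrow> vector_space sm \<and>
     (\<forall>c x y. sm c (x * y) = sm c x * y \<and> sm c (x * y) = x * sm c y)"

definition Pk_inc :: "nat \<Rightarrow> ('x::{order,finite} \<Rightarrow> 'x \<Rightarrow> 'f::field) set" where
  "Pk_inc k = {a \<in> incidence_alg. inc_pow a k = a}"

definition Pk :: "nat \<Rightarrow> 'b::ring set" where
  "Pk k = {a. bpow a k = a}"

definition primitive_root_of_unity :: "nat \<Rightarrow> 'f::field \<Rightarrow> bool" where
  "primitive_root_of_unity n w \<longleftrightarrow> w ^ n = 1 \<and> (\<forall>j. 0 < j \<and> j < n \<longrightarrow> w ^ j \<noteq> 1)"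

end

theory Submission
  imports Defs "HOL-Computational_Algebra.Primes"
begin

text \<open>
  Let \<open>w\<close> be a primitive \<open>(k-1)\<close>-th root of unity. If \<open>g, h\<close> are orthogonal idempotents of
  \<open>I(X, F)\<close>, every \<open>w\<^sup>j g + h\<close> is \<open>k\<close>-potent, so \<open>p = \<phi> g\<close> and \<open>q = \<phi> h\<close> satisfy
  \<open>(t p + q)\<^sup>k = t p + q\<close> for all \<open>t = w\<^sup>j\<close>. Averaging over these \<open>t\<close> isolates the part of
  \<open>(t p + q)\<^sup>k\<close> that is linear in \<open>p\<close>, and its vanishing forces \<open>p q = q p = 0\<close>
  (this is where \<open>char F\<close> not dividing \<open>k\<close> is used). Applied to \<open>g\<close> and \<open>\<delta> - g\<close> this gives
  \<open>\<phi> g u = (\<phi> g)\<^sup>2 = u \<phi> g\<close> for every idempotent \<open>g\<close>, hence \<open>\<phi> g u\<^bsup>k-2\<^esup> \<phi> g = \<phi> g\<close>.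
  As \<open>I(X, F)\<close> is spanned by the idempotents \<open>e\<^sub>x\<^sub>x\<close> and \<open>e\<^sub>x\<^sub>x + e\<^sub>x\<^sub>y\<close>, the linear conditions
  (commuting with \<open>u\<close>, lying in the corner \<open>u\<^bsup>k-1\<^esup> B u\<^bsup>k-1\<^esup>\<close>) follow. For the Jordan
  property, the symmetric bilinear defect \<open>J a b = \<phi>(ab + ba) - \<phi> a u\<^bsup>k-2\<^esup> \<phi> b - \<phi> b u\<^bsup>k-2\<^esup> \<phi> a\<close>
  vanishes at \<open>(g, g)\<close> for idempotent \<open>g\<close>; polarizing along families of idempotents built
  from matrix units shows that \<open>J\<close> vanishes on all pairs of matrix units, hence everywhere.
\<close>

section \<open>Positive powers\<close>

lemma bpow_Suc_left: "m \<ge> 1 \<Longrightarrow> bpow a (Suc m) = a * bpow a m"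
  by (cases m) auto

lemma bpow_Suc_right: "m \<ge> 1 \<Longrightarrow> bpow a (Suc m) = bpow a m * a"
proof (induction m rule: nat_induct_at_least)
  case (Suc m)
  then have "bpow a (Suc (Suc m)) = a * (bpow a m * a)" by (simp add: bpow_Suc_left)
  also have "\<dots> = bpow a (Suc m) * a" by (simp only: bpow_Suc_left[OF Suc(1)] mult.assoc)
  finally show ?case .
qed simp

lemma bpow_add: "i \<ge> 1 \<Longrightarrow> j \<ge> 1 \<Longrightarrow> bpow a (i + j) = bpow a i * bpow a j"
proof (induction i rule: nat_induct_at_least)
  case base
  then show ?case by (simp add: bpow_Suc_left)
next
  case (Suc i)
  then show ?case by (simp add: bpow_Suc_left mult.assoc)
qed

lemma bpow_mult_commute_shift: "a * c = c * b \<Longrightarrow> bpow a m * c = c * bpow b m"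
proof (induction m)
  case (Suc m)
  show ?case
  proof (cases "m = 0")
    case False
    then have "bpow a (Suc m) * c = a * (bpow a m * c)" by (simp add: bpow_Suc_left mult.assoc)
    also have "\<dots> = (a * c) * bpow b m" by (simp only: Suc.IH[OF Suc.prems] mult.assoc)
    also have "\<dots> = c * bpow b (Suc m)" using False by (simp add: Suc.prems bpow_Suc_left mult.assoc)
    finally show ?thesis .
  qed (use Suc in simp)
qed simp

lemma mult_bpow_eq_bpow_Suc:
  assumes "p * u = p * p" "j \<ge> 1"
  shows "p * bpow u j = bpow p (Suc j)"
  using assms(2)
proof (induction j rule: nat_induct_at_least)
  case (Suc j)
  have "p * bpow u (Suc j) = bpow p (Suc j) * u"
    using Suc by (simp only: bpow_Suc_right mult.assoc[symmetric])
  also have "\<dots> = bpow p j * (p * p)"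
    using Suc.hyps by (simp only: bpow_Suc_right mult.assoc assms(1))
  also have "\<dots> = bpow p (Suc (Suc j))"
    using Suc.hyps bpow_Suc_right[of j p] bpow_Suc_right[of "Suc j" p] by (simp add: mult.assoc)
  finally show ?case .
qed (use assms in simp)

lemma bpow_mult_eq_bpow_Suc:
  assumes "u * p = p * p" "j \<ge> 1"
  shows "bpow u j * p = bpow p (Suc j)"
  using assms(2)
proof (induction j rule: nat_induct_at_least)
  case (Suc j)
  have "bpow u (Suc j) * p = u * bpow p (Suc j)"
    using Suc by (simp only: bpow_Suc_left mult.assoc)
  also have "\<dots> = (p * p) * bpow p j"
    using Suc.hyps by (simp only: bpow_Suc_left mult.assoc[symmetric] assms(1))
  also have "\<dots> = bpow p (Suc (Suc j))"
    using Suc.hyps bpow_Suc_left[of j p] by (simp add: mult.assoc)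
  finally show ?case .
qed (use assms in simp)

lemma bpow_period:
  assumes "bpow q (Suc n) = q" "n \<ge> 1" "j \<ge> 1"
  shows "bpow q (j + n) = bpow q j"
proof (cases "j = 1")
  case False
  then obtain i where i: "j = Suc i" "i \<ge> 1" using assms(3) by (cases j) auto
  then have "bpow q (j + n) = bpow q i * bpow q (Suc n)" using bpow_add[of i "Suc n"] by simp
  then show ?thesis using assms(1) i by (simp add: bpow_Suc_right)
qed (use assms in simp)

lemma bpow_period_unit:
  assumes "bpow q (Suc n) = q" "n \<ge> 1" "j \<ge> 1"
  shows "bpow q n * bpow q j = bpow q j" "bpow q j * bpow q n = bpow q j"
  using bpow_add[of n j q] bpow_add[of j n q] bpow_period[OF assms] assms(2,3)
  by (simp_all add: add.commute)

section \<open>Roots of unity\<close>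

lemma primitive_root_of_unity_of_nat_neq_0:
  fixes w :: "'f::field"
  assumes root: "primitive_root_of_unity n w" and "n \<ge> 1"
  shows "of_nat n \<noteq> (0::'f)"
proof
  assume n0: "of_nat n = (0::'f)"
  have "CHAR('f) > 0" using n0 \<open>n \<ge> 1\<close> by (subst CHAR_pos_iff) (auto intro!: exI[of _ n])
  then have p: "prime CHAR('f)" by (rule prime_CHAR_semidom)
  obtain m where nm: "n = CHAR('f) * m" using n0 by (auto simp: of_nat_eq_0_iff_char_dvd elim: dvdE)
  \<comment> \<open>In characteristic \<open>p\<close>, \<open>(w\<^sup>m - 1)\<^sup>p = w\<^sup>n - 1 = 0\<close> for \<open>m = n / p\<close>.\<close>
  have "(w ^ m + (- 1)) ^ CHAR('f) = (w ^ m) ^ CHAR('f) + (- 1) ^ CHAR('f)"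
    by (rule freshmans_dream[OF p refl])
  also have "\<dots> = w ^ n - 1"
    by (simp add: minus_power_prime_CHAR[OF refl p] nm power_mult[symmetric] mult.commute)
  finally have "w ^ m = 1" using root by (simp add: primitive_root_of_unity_def)
  moreover have "m > 0" using nm \<open>n \<ge> 1\<close> by (cases m) auto
  moreover have "m < n" using nm \<open>m > 0\<close> prime_ge_2_nat[OF p] by simp
  ultimately show False using root by (auto simp: primitive_root_of_unity_def)
qed

lemma two_neq_0_if_of_nat_Suc_neq_0:
  assumes "of_nat (Suc n) \<noteq> (0::'f::field)" "of_nat n \<noteq> (0::'f)"
  shows "(2::'f) \<noteq> 0"
proof
  assume "(2::'f) = 0"
  then have even_0: "of_nat (2 * r) = (0::'f)" for r by simp
  show False
  proof (cases "even n")
    case True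
    then obtain r where "n = 2 * r" by (rule evenE)
    then show False using assms(2) even_0 by blast
  next
    case False
    then have "even (Suc n)" by simp
    then obtain r where "Suc n = 2 * r" by (rule evenE)
    then show False using assms(1) even_0 by metis
  qed
qed

lemma primitive_root_of_unity_power_sum:
  fixes w :: "'f::field"
  assumes root: "primitive_root_of_unity n w" and "n \<ge> 1"
  shows "(\<Sum>j<n. (w ^ s) ^ j) = (if n dvd s then of_nat n else 0)"
proof (cases "n dvd s")
  case True
  then show ?thesis using root by (auto simp: power_mult primitive_root_of_unity_def)
next
  case False
  have wn: "w ^ n = 1" using root by (simp add: primitive_root_of_unity_def)
  have "w ^ s = w ^ (n * (s div n) + s mod n)" by simp
  also have "\<dots> = (w ^ n) ^ (s div n) * w ^ (s mod n)" by (simp only: power_add power_mult)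
  finally have "w ^ s = w ^ (s mod n)" using wn by simp
  moreover have "0 < s mod n" "s mod n < n" using False \<open>n \<ge> 1\<close> by (auto simp: dvd_eq_mod_eq_0)
  ultimately have "w ^ s \<noteq> 1" using root by (auto simp: primitive_root_of_unity_def)
  moreover have "(w ^ s) ^ n = (w ^ n) ^ s" by (simp only: power_mult[symmetric] mult.commute)
  ultimately show ?thesis using False geometric_sum[of "w ^ s" n] wn by simp
qed

lemma (in vector_space) root_of_unity_filter:
  assumes root: "primitive_root_of_unity n w" and "n \<ge> 1"
  shows "(\<Sum>j<n. scale ((w ^ j) ^ r) (\<Sum>i\<le>m. scale ((w ^ j) ^ i) (c i)))
       = scale (of_nat n) (\<Sum>i\<in>{i. i \<le> m \<and> n dvd r + i}. c i)"
proof -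
  have "(\<Sum>j<n. scale ((w ^ j) ^ r) (\<Sum>i\<le>m. scale ((w ^ j) ^ i) (c i)))
      = (\<Sum>i\<le>m. scale (\<Sum>j<n. (w ^ (r + i)) ^ j) (c i))"
  proof -
    have "(w ^ j) ^ r * (w ^ j) ^ i = (w ^ (r + i)) ^ j" for i j
      by (simp add: power_add[symmetric] power_mult[symmetric] algebra_simps)
    then show ?thesis by (simp add: scale_sum_right sum.swap[of _ "{..<n}"] scale_sum_left)
  qed
  also have "\<dots> = (\<Sum>i\<le>m. if n dvd r + i then scale (of_nat n) (c i) else 0)"
    by (intro sum.cong refl) (simp add: primitive_root_of_unity_power_sum[OF assms])
  also have "\<dots> = scale (of_nat n) (\<Sum>i\<in>{i. i \<le> m \<and> n dvd r + i}. c i)"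
    by (simp add: sum.If_cases scale_sum_right atMost_def Collect_conj_eq Int_commute)
  finally show ?thesis .
qed

lemma dvd_pred_add_iff:
  assumes "n \<ge> 2" "i \<le> Suc n"
  shows "n dvd n - 1 + i \<longleftrightarrow> i = 1 \<or> i = Suc n"
proof (cases i)
  case 0
  then show ?thesis using assms by (auto dest: dvd_imp_le)
next
  case (Suc j)
  then have "n - 1 + i = j + n" using assms by simp
  then have "n dvd n - 1 + i \<longleftrightarrow> n dvd j" by simp
  also have "\<dots> \<longleftrightarrow> j = 0 \<or> j = n" using Suc assms by (auto dest: dvd_imp_le)
  finally show ?thesis using Suc by simp
qed

section \<open>Orthogonality of \<open>k\<close>-potents\<close>

text \<open>\<open>word_sum p q i m\<close> is the sum of all products of \<open>m\<close> factors from \<open>{p, q}\<close> with exactly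
  \<open>i\<close> factors \<open>p\<close>, i.e.\ the coefficient of \<open>t\<^sup>i\<close> in \<open>(t p + q)\<^sup>m\<close>.\<close>

fun word_sum :: "'b::ring \<Rightarrow> 'b \<Rightarrow> nat \<Rightarrow> nat \<Rightarrow> 'b" where
  "word_sum p q i 0 = 0"
| "word_sum p q i (Suc 0) = (if i = 0 then q else if i = 1 then p else 0)"
| "word_sum p q i (Suc (Suc m)) = (if i = 0 then q * word_sum p q 0 (Suc m)
      else p * word_sum p q (i - 1) (Suc m) + q * word_sum p q i (Suc m))"

lemma word_sum_eq_0_if_gt: "i > m \<Longrightarrow> word_sum p q i m = 0"
proof (induction p q i m rule: word_sum.induct)
  case (3 p q i m)
  then show ?case by (cases i) auto
qed auto

lemma word_sum_0: "word_sum p q 0 m = bpow q m"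
proof (induction m)
  case (Suc m)
  then show ?case by (cases m) auto
qed simp

lemma word_sum_diag: "m \<ge> 1 \<Longrightarrow> word_sum p q m m = bpow p m"
proof (induction m rule: nat_induct_at_least)
  case (Suc m)
  then obtain m' where "m = Suc m'" by (cases m) auto
  then show ?case using Suc.IH by (simp add: word_sum_eq_0_if_gt)
qed simp

lemma word_sum_1:
  "m \<ge> 1 \<Longrightarrow> word_sum p q 1 (Suc m)
     = p * bpow q m + bpow q m * p + (\<Sum>j\<in>{1..<m}. bpow q j * p * bpow q (m - j))"
proof (induction m rule: nat_induct_at_least)
  case (Suc m)
  have "(\<Sum>j\<in>{1..<Suc m}. bpow q j * p * bpow q (Suc m - j))
      = q * p * bpow q m + (\<Sum>j\<in>{Suc 1..<Suc m}. bpow q j * p * bpow q (Suc m - j))"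
    using Suc.hyps by (subst sum.atLeast_Suc_lessThan) auto
  also have "(\<Sum>j\<in>{Suc 1..<Suc m}. bpow q j * p * bpow q (Suc m - j))
      = (\<Sum>j\<in>{1..<m}. q * (bpow q j * p * bpow q (m - j)))"
    by (subst sum.shift_bounds_Suc_ivl) (auto intro!: sum.cong simp: bpow_Suc_left mult.assoc)
  finally have shift: "(\<Sum>j\<in>{1..<Suc m}. bpow q j * p * bpow q (Suc m - j))
      = q * p * bpow q m + (\<Sum>j\<in>{1..<m}. q * (bpow q j * p * bpow q (m - j)))" .
  have "word_sum p q 1 (Suc (Suc m)) = p * bpow q (Suc m) + q * word_sum p q 1 (Suc m)"
    by (simp add: word_sum_0)
  then show ?case
    using Suc shift by (simp add: bpow_Suc_left distrib_left sum_distrib_left mult.assoc add_ac)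
qed (simp add: word_sum_0)

lemma bpow_shifted_mult:
  assumes "bpow q (Suc n) = q" "n \<ge> 1"
  shows "bpow q (i + n) * bpow q (j + n) = bpow q (i + j + n)"
proof -
  have "bpow q (i + n) * bpow q (j + n) = bpow q ((i + j + n) + n)"
    using assms(2) bpow_add[of "i + n" "j + n" q] by (simp add: add_ac)
  also have "\<dots> = bpow q (i + j + n)" using bpow_period[OF assms] assms(2) by simp
  finally show ?thesis .
qed

lemma commute_if_cyclic_sum:
  assumes q: "bpow q (Suc n) = q" "n \<ge> 2"
    and corner: "bpow q n * x = x" "x * bpow q n = x"
    and sum_0: "x + x + (\<Sum>j\<in>{1..<n}. bpow q j * x * bpow q (n - j)) = 0"
  shows "q * x = x * q"
proof -
  \<comment> \<open>\<open>Q j\<close> is the \<open>j\<close>-th power of \<open>q\<close> in the unital corner with identity \<open>Q 0 = q\<^sup>n\<close>.\<close>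
  define Q where "Q j = bpow q (j + n)" for j
  have QQ: "Q i * Q j = Q (i + j)" for i j
    unfolding Q_def using bpow_shifted_mult[OF q(1)] q(2) by simp
  have Q_eq: "Q j = bpow q j" if "j \<ge> 1" for j
    unfolding Q_def using bpow_period[OF q(1)] q(2) that by simp
  have Q_period: "Q (i + n) = Q i" for i
    unfolding Q_def using bpow_period[OF q(1), of "i + n"] q(2) by simp
  have Q_n: "Q n = Q 0" using Q_period[of 0] by simp
  define g where "g j = Q j * x * Q (n - j)" for j
  have g_0: "g 0 = x" and g_n: "g n = x"
    using corner Q_n by (simp_all add: g_def Q_def mult.assoc)
  define G where "G = (\<Sum>j<n. g j)"
  have "G = g 0 + (\<Sum>j\<in>{1..<n}. g j)"
    unfolding G_def using q(2) by (simp add: atLeast0LessThan[symmetric] sum.atLeast_Suc_lessThan)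
  also have "(\<Sum>j\<in>{1..<n}. g j) = (\<Sum>j\<in>{1..<n}. bpow q j * x * bpow q (n - j))"
    by (intro sum.cong refl) (auto simp: g_def Q_eq)
  finally have x_G: "x + G = 0" using sum_0 g_0 by (simp add: add.assoc)
  \<comment> \<open>Conjugation by \<open>q\<close> permutes the terms of \<open>G\<close> cyclically.\<close>
  have "Q 1 * g j * Q (n - 1) = g (Suc j)" if "j < n" for j
  proof -
    have "Q 1 * g j * Q (n - 1) = Q (Suc j) * x * Q (n - Suc j + n)"
      using that q(2) by (simp add: g_def QQ mult.assoc[symmetric]) (simp add: mult.assoc QQ)
    also have "Q (n - Suc j + n) = Q (n - Suc j)" by (rule Q_period)
    finally show ?thesis by (simp add: g_def)
  qed
  then have "Q 1 * G * Q (n - 1) = (\<Sum>j<n. g (Suc j))"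
    unfolding G_def by (simp add: sum_distrib_left sum_distrib_right)
  also have "\<dots> = G"
    using sum.lessThan_Suc_shift[of g n] g_0 g_n by (simp add: G_def add.commute)
  finally have "Q 1 * x * Q (n - 1) = x"
    using x_G by (simp add: minus_equation_iff eq_neg_iff_add_eq_0[symmetric])
  then have "x * Q 1 = Q 1 * x * (Q (n - 1) * Q 1)" by (metis mult.assoc)
  then have "x * q = Q 1 * x * (Q (n - 1) * Q 1)" using Q_eq[of 1] by simp
  also have "\<dots> = q * x"
    using QQ[of "n - 1" 1] q(2) Q_n Q_eq[of 1] corner(2) by (simp add: Q_def mult.assoc)
  finally show ?thesis by simp
qed

text \<open>By \<open>word_sum_1\<close> the hypothesis reads \<open>p F + F p + (\<Sum>0<j<n. q\<^sup>j p q\<^bsup>n-j\<^esup>) = 0\<close> with the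
  idempotent \<open>F = q\<^sup>n\<close>; its Peirce components with respect to \<open>F\<close> are the three conclusions.\<close>

lemma word_sum_1_eq_0_corner:
  fixes p q :: "'b::ring"
  assumes q: "bpow q (Suc n) = q" "n \<ge> 2" and W_0: "word_sum p q 1 (Suc n) = 0"
  defines "x \<equiv> bpow q n * p * bpow q n"
  shows "bpow q n * p = x" "p * bpow q n = x"
    "x + x + (\<Sum>j\<in>{1..<n}. bpow q j * x * bpow q (n - j)) = 0"
proof -
  define F where "F = bpow q n"
  have F_pow: "F * bpow q j = bpow q j" "bpow q j * F = bpow q j" if "j \<ge> 1" for j
    using bpow_period_unit[OF q(1) _ that] q(2) by (simp_all add: F_def)
  have FF: "F * F = F" "F * (F * y) = F * y" for y
    using F_pow[of n] q(2) by (simp_all add: F_def mult.assoc[symmetric])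
  define M where "M = (\<Sum>j\<in>{1..<n}. bpow q j * p * bpow q (n - j))"
  have M_F: "F * M = M" "M * F = M"
    by (auto simp: M_def sum_distrib_left sum_distrib_right intro!: sum.cong)
      (simp_all add: mult.assoc[symmetric] F_pow, simp add: mult.assoc F_pow)
  have W: "p * F + F * p + M = 0"
    using W_0 word_sum_1[of n p q] q(2) by (simp add: F_def M_def)
  have "F * (p * F + F * p + M) - F * (p * F + F * p + M) * F = F * p - x"
    using FF M_F by (simp add: x_def F_def distrib_left distrib_right mult.assoc)
  then show "bpow q n * p = x" using W by (simp add: F_def)
  have "(p * F + F * p + M) * F - F * (p * F + F * p + M) * F = p * F - x"
    using FF M_F by (simp add: x_def F_def distrib_left distrib_right mult.assoc)
  then show "p * bpow q n = x" using W by (simp add: F_def)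
  have "bpow q j * x * bpow q l = bpow q j * p * bpow q l" if "j \<ge> 1" "l \<ge> 1" for j l
  proof -
    have "bpow q j * x * bpow q l = (bpow q j * F) * p * (F * bpow q l)"
      by (simp add: x_def F_def mult.assoc)
    then show ?thesis using F_pow that by simp
  qed
  then have "(\<Sum>j\<in>{1..<n}. bpow q j * x * bpow q (n - j)) = M"
    unfolding M_def by (intro sum.cong refl) auto
  moreover have "F * (p * F + F * p + M) * F = x + x + M"
    using FF M_F by (simp add: x_def F_def distrib_left distrib_right mult.assoc)
  ultimately show "x + x + (\<Sum>j\<in>{1..<n}. bpow q j * x * bpow q (n - j)) = 0" using W by simp
qed

locale f_algebra =
  fixes sm :: "'f::field \<Rightarrow> 'b::ring \<Rightarrow> 'b"
  assumes F_algebra: "F_algebra sm"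
begin

sublocale vector_space sm
  using F_algebra by (simp add: F_algebra_def)

lemma scale_mult_left: "sm c x * y = sm c (x * y)"
  using F_algebra unfolding F_algebra_def by metis

lemma scale_mult_right: "x * sm c y = sm c (x * y)"
  using F_algebra unfolding F_algebra_def by metis

lemma eq_0_if_add_self_eq_0: "(2::'f) \<noteq> 0 \<Longrightarrow> x + x = 0 \<Longrightarrow> (x::'b) = 0"
  using scale_left_distrib[of 1 1 x] by simp

lemma bpow_scale_add:
  fixes p q :: 'b
  shows "m \<ge> 1 \<Longrightarrow> bpow (sm t p + q) m = (\<Sum>i\<le>m. sm (t ^ i) (word_sum p q i m))"
proof (induction m rule: nat_induct_at_least)
  case base
  show ?case by (simp add: add.commute)
next
  case (Suc m)
  then obtain m' where m': "m = Suc m'" by (cases m) auto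
  define f where "f i = sm (t ^ i) (q * word_sum p q i m)" for i
  have "(\<Sum>i\<le>m. f i) = (\<Sum>i\<le>Suc m. f i)"
    by (simp add: f_def word_sum_eq_0_if_gt)
  also have "\<dots> = f 0 + (\<Sum>i\<le>m. f (Suc i))"
    by (rule sum.atMost_Suc_shift)
  finally have f_shift: "(\<Sum>i\<le>m. f i) = f 0 + (\<Sum>i\<le>m. f (Suc i))" .
  have "bpow (sm t p + q) (Suc m) = (sm t p + q) * bpow (sm t p + q) m"
    using Suc by (simp add: bpow_Suc_left)
  also have "\<dots> = (\<Sum>i\<le>m. sm (t ^ Suc i) (p * word_sum p q i m)) + (\<Sum>i\<le>m. f i)"
    by (simp add: Suc.IH distrib_right sum_distrib_left scale_mult_left scale_mult_right f_def
        sum.distrib scale_right_distrib mult.commute)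
  also have "\<dots> = (\<Sum>i\<le>m. sm (t ^ Suc i) (p * word_sum p q i m)) + f 0 + (\<Sum>i\<le>m. f (Suc i))"
    by (simp add: f_shift add.assoc)
  also have "\<dots> = sm (t ^ 0) (word_sum p q 0 (Suc m))
      + (\<Sum>i\<le>m. sm (t ^ Suc i) (word_sum p q (Suc i) (Suc m)))"
    by (simp add: m' f_def sum.distrib scale_right_distrib)
  also have "\<dots> = (\<Sum>i\<le>Suc m. sm (t ^ i) (word_sum p q i (Suc m)))"
    by (rule sum.atMost_Suc_shift[symmetric])
  finally show ?case .
qed

lemma orthogonal_if_word_sum_1_eq_0:
  fixes p q :: 'b
  assumes k: "k = Suc n" "n \<ge> 2" and char: "of_nat k \<noteq> (0::'f)"
    and q: "bpow q k = q" and W_0: "word_sum p q 1 k = 0"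
  shows "p * q = 0 \<and> q * p = 0"
proof -
  define x where "x = bpow q n * p * bpow q n"
  have q_n: "bpow q (Suc n) = q" using q k by simp
  note corner = word_sum_1_eq_0_corner[OF q_n k(2) W_0[unfolded k], folded x_def]
  have FF: "bpow q n * bpow q n = bpow q n" using bpow_period_unit[OF q_n, of n] k(2) by simp
  have "bpow q n * x = (bpow q n * bpow q n) * p"
    by (simp add: corner(1)[symmetric] mult.assoc)
  moreover have "x * bpow q n = p * (bpow q n * bpow q n)"
    by (simp add: corner(2)[symmetric] mult.assoc)
  ultimately have x_F: "bpow q n * x = x" "x * bpow q n = x" using FF corner(1,2) by simp_all
  have qx: "q * x = x * q" using commute_if_cyclic_sum[OF q_n k(2) x_F corner(3)] .
  \<comment> \<open>Hence every term of the cyclic sum equals \<open>x\<close>, and the sum is \<open>(n + 1) x = k x\<close>.\<close>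
  have "bpow q j * x * bpow q (n - j) = x" if "j \<in> {1..<n}" for j
  proof -
    have "bpow q j * x * bpow q (n - j) = x * bpow q (j + (n - j))"
      using bpow_mult_commute_shift[OF qx, of j] bpow_add[of j "n - j" q] that
      by (auto simp: mult.assoc)
    then show ?thesis using that x_F by simp
  qed
  then have "x + x + sm (of_nat (n - 1)) x = 0" using corner(3) by (simp add: sum_constant_scale)
  moreover have "(of_nat k :: 'f) = 1 + 1 + of_nat (n - 1)" using k by (simp add: of_nat_diff)
  then have "sm (of_nat k) x = sm 1 x + sm 1 x + sm (of_nat (n - 1)) x"
    by (simp only: scale_left_distrib)
  ultimately have "x = 0" using char by simp
  have "p * q = p * bpow q n * q" "q * p = q * bpow q n * p"
    using bpow_period_unit[OF q_n, of 1] k(2) by (simp_all add: mult.assoc)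
  then show ?thesis using \<open>x = 0\<close> corner(1,2) by (simp add: mult.assoc)
qed

text \<open>Averaging \<open>(t p + q)\<^sup>k = t p + q\<close> over the roots \<open>t = w\<^sup>j\<close> singles out the coefficient of
  \<open>t\<^sup>1\<close> in \<open>(t p + q)\<^sup>k\<close>.\<close>

lemma orthogonal_if_root_combinations_kpotent:
  fixes p q :: 'b
  assumes k: "k \<ge> 3" and root: "primitive_root_of_unity (k - 1) w"
    and char: "of_nat k \<noteq> (0::'f)" and p: "bpow p k = p" and q: "bpow q k = q"
    and comb: "\<And>j. j < k - 1 \<Longrightarrow> bpow (sm (w ^ j) p + q) k = sm (w ^ j) p + q"
  shows "p * q = 0 \<and> q * p = 0"
proof -
  define n where "n = k - 1"
  have kn: "k = Suc n" "n \<ge> 2" using k by (auto simp: n_def)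
  have n_root: "primitive_root_of_unity n w" using root by (simp add: n_def)
  have n_pos: "n \<ge> 1" using kn by simp
  have "(\<Sum>i\<le>k. sm ((w ^ j) ^ i) (word_sum p q i k))
      = (\<Sum>i\<le>1. sm ((w ^ j) ^ i) (word_sum p q i 1))" if "j < n" for j
  proof -
    have "bpow (sm (w ^ j) p + q) k = bpow (sm (w ^ j) p + q) 1"
      using comb[of j] that by (simp add: n_def)
    then show ?thesis using bpow_scale_add[of k "w ^ j" p q] bpow_scale_add[of 1 "w ^ j" p q] kn
      by simp
  qed
  then have "(\<Sum>j<n. sm ((w ^ j) ^ (n - 1)) (\<Sum>i\<le>k. sm ((w ^ j) ^ i) (word_sum p q i k)))
      = (\<Sum>j<n. sm ((w ^ j) ^ (n - 1)) (\<Sum>i\<le>1. sm ((w ^ j) ^ i) (word_sum p q i 1)))"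
    by (intro sum.cong) auto
  then have filtered: "sm (of_nat n) (\<Sum>i\<in>{i. i \<le> k \<and> n dvd n - 1 + i}. word_sum p q i k)
      = sm (of_nat n) (\<Sum>i\<in>{i. i \<le> 1 \<and> n dvd n - 1 + i}. word_sum p q i 1)"
    by (simp only: root_of_unity_filter[OF n_root n_pos])
  have dvd_iff: "i \<le> k \<and> n dvd n - 1 + i \<longleftrightarrow> i = 1 \<or> i = k" for i
  proof (cases "i \<le> k")
    case True
    then show ?thesis using dvd_pred_add_iff[OF kn(2), of i] kn(1) by simp
  qed (use kn(1) in auto)
  have "{i. i \<le> k \<and> n dvd n - 1 + i} = {1, k}"
    using dvd_iff by blast
  moreover have "{i. i \<le> 1 \<and> n dvd n - 1 + i} = {1}"
    using dvd_iff[of 0] dvd_iff[of 1] kn by (auto simp: le_Suc_eq)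
  ultimately have "sm (of_nat n) (\<Sum>i\<in>{1, k}. word_sum p q i k) = sm (of_nat n) p"
    using filtered by simp
  moreover have "(\<Sum>i\<in>{1, k}. word_sum p q i k) = word_sum p q 1 k + p"
    using kn word_sum_diag[of k p q] p by simp
  moreover have "of_nat n \<noteq> (0::'f)"
    using primitive_root_of_unity_of_nat_neq_0[OF n_root n_pos] .
  ultimately have "word_sum p q 1 k = 0" by simp
  then show ?thesis using orthogonal_if_word_sum_1_eq_0[OF kn char q] by simp
qed

end

section \<open>The incidence algebra\<close>

definition inc_unit :: "'x \<Rightarrow> 'x \<Rightarrow> 'x \<Rightarrow> 'x \<Rightarrow> 'f::field" where
  "inc_unit x y = (\<lambda>a b. if a = x \<and> b = y then 1 else 0)"

definition inc_zero :: "'x \<Rightarrow> 'x \<Rightarrow> 'f::field" where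
  "inc_zero = (\<lambda>_ _. 0)"

definition inc_idempotent :: "('x::{order,finite} \<Rightarrow> 'x \<Rightarrow> 'f::field) \<Rightarrow> bool" where
  "inc_idempotent g \<longleftrightarrow> g \<in> incidence_alg \<and> inc_mult g g = g"

lemma inc_add_closed [simp]: "f \<in> incidence_alg \<Longrightarrow> g \<in> incidence_alg \<Longrightarrow> inc_add f g \<in> incidence_alg"
  by (simp add: incidence_alg_def inc_add_def)

lemma inc_smult_closed [simp]: "f \<in> incidence_alg \<Longrightarrow> inc_smult c f \<in> incidence_alg"
  by (simp add: incidence_alg_def inc_smult_def)

lemma inc_mult_closed [simp]: "inc_mult f g \<in> incidence_alg"
  by (auto simp: incidence_alg_def inc_mult_def intro!: sum.neutral dest: order_trans)

lemma inc_unit_closed [simp]: "x \<le> y \<Longrightarrow> inc_unit x y \<in> incidence_alg"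
  by (auto simp: incidence_alg_def inc_unit_def)

lemma inc_delta_closed [simp]: "inc_delta \<in> incidence_alg"
  by (simp add: incidence_alg_def inc_delta_def)

lemma inc_smult_one [simp]: "inc_smult 1 f = f"
  by (simp add: inc_smult_def)

lemma inc_mult_add_left: "inc_mult (inc_add f g) h = inc_add (inc_mult f h) (inc_mult g h)"
  by (simp add: inc_mult_def inc_add_def distrib_right sum.distrib)

lemma inc_mult_add_right: "inc_mult h (inc_add f g) = inc_add (inc_mult h f) (inc_mult h g)"
  by (simp add: inc_mult_def inc_add_def distrib_left sum.distrib)

lemma inc_mult_smult_left: "inc_mult (inc_smult c f) h = inc_smult c (inc_mult f h)"
  by (simp add: inc_mult_def inc_smult_def sum_distrib_left mult.assoc)

lemma inc_mult_smult_right: "inc_mult h (inc_smult c f) = inc_smult c (inc_mult h f)"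
  by (simp add: inc_mult_def inc_smult_def sum_distrib_left mult.left_commute)

lemma inc_mult_delta_left:
  assumes "f \<in> incidence_alg"
  shows "inc_mult inc_delta f = f"
proof (intro ext)
  fix a b
  have "inc_mult inc_delta f a b = (\<Sum>s\<in>{s. a \<le> s \<and> s \<le> b}. if s = a then f s b else 0)"
    unfolding inc_mult_def inc_delta_def by (intro sum.cong) auto
  also have "\<dots> = f a b" using assms by (subst sum.delta) (auto simp: incidence_alg_def)
  finally show "inc_mult inc_delta f a b = f a b" .
qed

lemma inc_mult_delta_right:
  assumes "f \<in> incidence_alg"
  shows "inc_mult f inc_delta = f"
proof (intro ext)
  fix a b
  have "inc_mult f inc_delta a b = (\<Sum>s\<in>{s. a \<le> s \<and> s \<le> b}. if s = b then f a s else 0)"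
    unfolding inc_mult_def inc_delta_def by (intro sum.cong) auto
  also have "\<dots> = f a b" using assms by (subst sum.delta) (auto simp: incidence_alg_def)
  finally show "inc_mult f inc_delta a b = f a b" .
qed

lemma inc_mult_unit_unit:
  assumes "x \<le> y" "z \<le> t"
  shows "inc_mult (inc_unit x y) (inc_unit z t) = (if y = z then inc_unit x t else inc_zero)"
proof (intro ext)
  fix a b
  have "inc_mult (inc_unit x y) (inc_unit z t) a b
      = (\<Sum>s\<in>{s. a \<le> s \<and> s \<le> b}. if s = y then (if a = x \<and> y = z \<and> b = t then 1 else 0) else 0)"
    unfolding inc_mult_def inc_unit_def by (intro sum.cong) auto
  also have "\<dots> = (if a = x \<and> y = z \<and> b = t then 1 else 0)"
    using assms by (subst sum.delta) auto
  also have "\<dots> = (if y = z then inc_unit x t else inc_zero) a b"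
    by (simp add: inc_unit_def inc_zero_def)
  finally show "inc_mult (inc_unit x y) (inc_unit z t) a b
      = (if y = z then inc_unit x t else inc_zero) a b" .
qed

lemma inc_mult_assoc: "inc_mult (inc_mult f g) h = inc_mult f (inc_mult g h)"
proof (intro ext)
  fix a b
  define G where "G s t = f a s * g s t * h t b" for s t
  define I where "I = {s. a \<le> s \<and> s \<le> b}"
  have "inc_mult (inc_mult f g) h a b = (\<Sum>t\<in>I. \<Sum>s\<in>{s. a \<le> s \<and> s \<le> t}. G s t)"
    by (simp add: inc_mult_def sum_distrib_right G_def I_def)
  also have "\<dots> = (\<Sum>t\<in>I. \<Sum>s\<in>{s. s \<in> I \<and> s \<le> t}. G s t)"
    by (intro sum.cong) (auto simp: I_def intro: order_trans)
  also have "\<dots> = (\<Sum>s\<in>I. \<Sum>t\<in>{t. t \<in> I \<and> s \<le> t}. G s t)"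
    by (rule sum.swap_restrict[symmetric]) simp_all
  also have "\<dots> = (\<Sum>s\<in>I. \<Sum>t\<in>{t. s \<le> t \<and> t \<le> b}. G s t)"
    by (intro sum.cong) (auto simp: I_def intro: order_trans)
  also have "\<dots> = inc_mult f (inc_mult g h) a b"
    by (simp add: inc_mult_def sum_distrib_left mult.assoc G_def I_def)
  finally show "inc_mult (inc_mult f g) h a b = inc_mult f (inc_mult g h) a b" .
qed

lemma (in vector_space) inc_linear_eq_0_if_eq_0_on_units:
  fixes L :: "('x::{order,finite} \<Rightarrow> 'x \<Rightarrow> 'a) \<Rightarrow> 'b"
  assumes add: "\<And>f g. f \<in> incidence_alg \<Longrightarrow> g \<in> incidence_alg \<Longrightarrow> L (inc_add f g) = L f + L g"
    and smult: "\<And>c f. f \<in> incidence_alg \<Longrightarrow> L (inc_smult c f) = scale c (L f)"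
    and units: "\<And>x y. x \<le> y \<Longrightarrow> L (inc_unit x y) = 0"
    and a: "a \<in> incidence_alg"
  shows "L a = 0"
proof -
  define restr where "restr S = (\<lambda>i j. if (i, j) \<in> S then a i j else 0)" for S
  have restr_closed: "restr S \<in> incidence_alg" if "S \<subseteq> {(x, y). x \<le> y}" for S
    using that by (auto simp: restr_def incidence_alg_def)
  have "L (restr S) = 0" if "finite S" "S \<subseteq> {(x, y). x \<le> y}" for S
    using that
  proof (induction S rule: finite_induct)
    case empty
    have "restr {} = inc_smult 0 (restr {})" by (simp add: restr_def inc_smult_def)
    then show ?case using smult[OF restr_closed, of "{}" 0] by simp
  next
    case (insert p S)
    obtain x y where p: "p = (x, y)" by fastforce
    have "restr (insert p S) = inc_add (restr S) (inc_smult (a x y) (inc_unit x y))"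
      using insert p by (auto simp: restr_def inc_add_def inc_smult_def inc_unit_def fun_eq_iff)
    then show ?case using insert p restr_closed add smult units by simp
  qed
  moreover have "restr {(x, y). x \<le> y} = a"
    using a by (auto simp: restr_def incidence_alg_def fun_eq_iff)
  ultimately show ?thesis by force
qed

lemma inc_pow_idempotent:
  assumes "inc_idempotent g" "m \<ge> 1"
  shows "inc_pow g m = g"
  using assms(2)
proof (induction m rule: nat_induct_at_least)
  case base
  then show ?case using assms(1) by (simp add: inc_idempotent_def inc_mult_delta_right)
qed (use assms(1) in \<open>simp add: inc_idempotent_def\<close>)

lemma inc_pow_orthogonal_combination:
  assumes "inc_idempotent g" "inc_idempotent h"
    and "inc_mult g h = inc_zero" "inc_mult h g = inc_zero" "m \<ge> 1"
  shows "inc_pow (inc_add (inc_smult t g) h) m = inc_add (inc_smult (t ^ m) g) h"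
  using assms(5)
proof (induction m rule: nat_induct_at_least)
  case base
  then show ?case using assms by (simp add: inc_idempotent_def inc_mult_delta_right)
next
  case (Suc m)
  then show ?case using assms
    by (simp add: inc_idempotent_def inc_mult_add_left inc_mult_add_right inc_mult_smult_left
        inc_mult_smult_right)
      (simp add: fun_eq_iff inc_add_def inc_smult_def inc_zero_def mult.commute)
qed

lemmas inc_mult_expand =
  inc_mult_add_left inc_mult_add_right inc_mult_smult_left inc_mult_smult_right inc_mult_unit_unit

lemmas inc_fun_eq_iff = fun_eq_iff inc_add_def inc_smult_def inc_unit_def inc_zero_def

lemma inc_idempotent_unit: "inc_idempotent (inc_unit x x)"
  by (simp add: inc_idempotent_def inc_mult_unit_unit)

lemma inc_idempotent_unit_row:
  assumes "x < y"
  shows "inc_idempotent (inc_add (inc_unit x x) (inc_smult c (inc_unit x y)))"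
  using assms by (simp add: inc_idempotent_def inc_mult_expand) (auto simp: inc_fun_eq_iff)

lemma inc_idempotent_unit_col:
  assumes "x < y"
  shows "inc_idempotent (inc_add (inc_unit y y) (inc_smult c (inc_unit x y)))"
  using assms by (simp add: inc_idempotent_def inc_mult_expand) (auto simp: inc_fun_eq_iff)

lemma inc_idempotent_units_diag:
  assumes "x \<noteq> z"
  shows "inc_idempotent (inc_add (inc_unit x x) (inc_unit z z))"
  using assms by (simp add: inc_idempotent_def inc_mult_expand) (auto simp: inc_fun_eq_iff)

lemma inc_idempotent_row_add_unit:
  assumes "x < y" "z \<noteq> x" "z \<noteq> y"
  shows "inc_idempotent (inc_add (inc_add (inc_unit x x) (inc_unit x y)) (inc_unit z z))"
  using assms by (simp add: inc_idempotent_def inc_mult_expand) (auto simp: inc_fun_eq_iff)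

lemma inc_idempotent_row_line:
  assumes "x < y" "x < t" "y \<noteq> t"
  shows "inc_idempotent
    (inc_add (inc_add (inc_unit x x) (inc_unit x y)) (inc_smult c (inc_unit x t)))"
  using assms by (simp add: inc_idempotent_def inc_mult_expand) (auto simp: inc_fun_eq_iff)

lemma inc_idempotent_rows:
  assumes "x < y" "z < t" "x \<noteq> z" "y \<noteq> z" "t \<noteq> x"
  shows "inc_idempotent
    (inc_add (inc_add (inc_unit x x) (inc_unit x y)) (inc_add (inc_unit z z) (inc_unit z t)))"
  using assms by (simp add: inc_idempotent_def inc_mult_expand) (auto simp: inc_fun_eq_iff)

lemma inc_idempotent_chain_line:
  assumes "x < y" "y < t"
  shows "inc_idempotent (inc_add (inc_add (inc_unit y y) (inc_unit y t))
    (inc_smult c (inc_add (inc_unit x y) (inc_unit x t))))"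
  using assms by (simp add: inc_idempotent_def inc_mult_expand) (auto simp: inc_fun_eq_iff)

section \<open>Linear maps preserving \<open>k\<close>-potents\<close>

locale kpotent_preserver = f_algebra sm for sm :: "'f::field \<Rightarrow> 'b::ring \<Rightarrow> 'b" +
  fixes k :: nat and \<phi> :: "('x::{order,finite} \<Rightarrow> 'x \<Rightarrow> 'f) \<Rightarrow> 'b" and w :: 'f
  assumes k: "k \<ge> 3" and root: "primitive_root_of_unity (k - 1) w"
    and char: "of_nat k \<noteq> (0::'f)"
    and additive: "\<forall>f\<in>incidence_alg. \<forall>g\<in>incidence_alg. \<phi> (inc_add f g) = \<phi> f + \<phi> g"
    and homogeneous: "\<forall>c. \<forall>f\<in>incidence_alg. \<phi> (inc_smult c f) = sm c (\<phi> f)"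
    and preserves_kpotents: "\<phi> ` Pk_inc k \<subseteq> Pk k"
begin

abbreviation "u \<equiv> \<phi> inc_delta"

lemma phi_add [simp]: "f \<in> incidence_alg \<Longrightarrow> g \<in> incidence_alg \<Longrightarrow> \<phi> (inc_add f g) = \<phi> f + \<phi> g"
  using additive by blast

lemma phi_smult [simp]: "f \<in> incidence_alg \<Longrightarrow> \<phi> (inc_smult c f) = sm c (\<phi> f)"
  using homogeneous by blast

lemma two_neq_0: "(2::'f) \<noteq> 0"
proof (rule two_neq_0_if_of_nat_Suc_neq_0)
  show "of_nat (Suc (k - 1)) \<noteq> (0::'f)" using char k by simp
  show "of_nat (k - 1) \<noteq> (0::'f)" using primitive_root_of_unity_of_nat_neq_0[OF root] k by simp
qed

lemma kpotent_image: "f \<in> incidence_alg \<Longrightarrow> inc_pow f k = f \<Longrightarrow> bpow (\<phi> f) k = \<phi> f"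
  using preserves_kpotents by (auto simp: Pk_inc_def Pk_def)

lemma kpotent_image_idempotent: "inc_idempotent g \<Longrightarrow> bpow (\<phi> g) k = \<phi> g"
  using kpotent_image inc_pow_idempotent[of g k] k by (simp add: inc_idempotent_def)

lemma image_orthogonal:
  assumes g: "inc_idempotent g" and h: "inc_idempotent h"
    and orth: "inc_mult g h = inc_zero" "inc_mult h g = inc_zero"
  shows "\<phi> g * \<phi> h = 0 \<and> \<phi> h * \<phi> g = 0"
proof (rule orthogonal_if_root_combinations_kpotent[OF k root char])
  show "bpow (\<phi> g) k = \<phi> g" "bpow (\<phi> h) k = \<phi> h"
    using g h by (simp_all add: kpotent_image_idempotent)
  fix j
  have "(w ^ j) ^ k = (w ^ (k - 1)) ^ j * w ^ j"
    using k by (simp add: power_mult[symmetric] power_add[symmetric] algebra_simps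
        flip: power_Suc2)
  then have "(w ^ j) ^ k = w ^ j" using root by (simp add: primitive_root_of_unity_def)
  then have "inc_pow (inc_add (inc_smult (w ^ j) g) h) k = inc_add (inc_smult (w ^ j) g) h"
    using inc_pow_orthogonal_combination[OF g h orth, of k "w ^ j"] k by simp
  moreover have "inc_add (inc_smult (w ^ j) g) h \<in> incidence_alg"
    using g h by (simp add: inc_idempotent_def)
  ultimately have "bpow (\<phi> (inc_add (inc_smult (w ^ j) g) h)) k
      = \<phi> (inc_add (inc_smult (w ^ j) g) h)"
    by (intro kpotent_image)
  then show "bpow (sm (w ^ j) (\<phi> g) + \<phi> h) k = sm (w ^ j) (\<phi> g) + \<phi> h"
    using g h by (simp add: inc_idempotent_def)
qed

text \<open>The complement \<open>\<delta> - g\<close> of an idempotent \<open>g\<close> is an idempotent orthogonal to it.\<close>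

lemma image_idempotent_mult_u:
  assumes g: "inc_idempotent g"
  shows "\<phi> g * u = \<phi> g * \<phi> g" "u * \<phi> g = \<phi> g * \<phi> g"
proof -
  define h where "h = inc_add inc_delta (inc_smult (-1) g)"
  have g_in: "g \<in> incidence_alg" and gg: "inc_mult g g = g"
    using g by (auto simp: inc_idempotent_def)
  have "inc_idempotent h" "inc_mult g h = inc_zero" "inc_mult h g = inc_zero"
    by (simp_all add: h_def inc_idempotent_def inc_mult_add_left inc_mult_add_right
        inc_mult_smult_left inc_mult_smult_right inc_mult_delta_left inc_mult_delta_right g_in gg)
      (simp_all add: fun_eq_iff inc_add_def inc_smult_def inc_zero_def)
  then have "\<phi> g * \<phi> h = 0" "\<phi> h * \<phi> g = 0" using image_orthogonal[OF g] by auto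
  moreover have "\<phi> h = u - \<phi> g" using g_in by (simp add: h_def)
  ultimately show "\<phi> g * u = \<phi> g * \<phi> g" "u * \<phi> g = \<phi> g * \<phi> g"
    by (simp_all add: algebra_simps)
qed

lemma image_idempotent_corner:
  assumes "inc_idempotent g"
  shows "bpow u (k - 1) * \<phi> g = \<phi> g" "\<phi> g * bpow u (k - 1) = \<phi> g"
  using bpow_mult_eq_bpow_Suc[OF image_idempotent_mult_u(2)[OF assms], of "k - 1"]
    mult_bpow_eq_bpow_Suc[OF image_idempotent_mult_u(1)[OF assms], of "k - 1"]
    kpotent_image_idempotent[OF assms] k
  by simp_all

lemma image_idempotent_sandwich:
  assumes "inc_idempotent g"
  shows "\<phi> g * bpow u (k - 2) * \<phi> g = \<phi> g"
proof -
  have "\<phi> g * bpow u (k - 2) = bpow (\<phi> g) (k - 1)"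
    using mult_bpow_eq_bpow_Suc[OF image_idempotent_mult_u(1)[OF assms], of "k - 2"] k
    by (simp add: Suc_diff_Suc numeral_2_eq_2)
  then show ?thesis
    using bpow_Suc_right[of "k - 1" "\<phi> g"] kpotent_image_idempotent[OF assms] k by simp
qed

text \<open>Every element of \<open>I(X, F)\<close> is a linear combination of the idempotents \<open>e\<^sub>x\<^sub>x\<close> and
  \<open>e\<^sub>x\<^sub>x + e\<^sub>x\<^sub>y\<close>.\<close>

lemma eq_0_if_eq_0_on_idempotents:
  fixes L :: "('x \<Rightarrow> 'x \<Rightarrow> 'f) \<Rightarrow> 'b"
  assumes add: "\<And>f g. f \<in> incidence_alg \<Longrightarrow> g \<in> incidence_alg \<Longrightarrow> L (inc_add f g) = L f + L g"
    and smult: "\<And>c f. f \<in> incidence_alg \<Longrightarrow> L (inc_smult c f) = sm c (L f)"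
    and idem: "\<And>g. inc_idempotent g \<Longrightarrow> L g = 0"
    and a: "a \<in> incidence_alg"
  shows "L a = 0"
proof (rule inc_linear_eq_0_if_eq_0_on_units[OF add smult _ a])
  fix x y :: 'x
  assume "x \<le> y"
  show "L (inc_unit x y) = 0"
  proof (cases "x = y")
    case False
    then have xy: "x < y" using \<open>x \<le> y\<close> by simp
    define g :: "'x \<Rightarrow> 'x \<Rightarrow> 'f" where "g = inc_add (inc_unit x x) (inc_unit x y)"
    have g: "inc_idempotent g" using inc_idempotent_unit_row[OF xy, of 1] by (simp add: g_def)
    have "inc_unit x y = inc_add g (inc_smult (-1) (inc_unit x x))"
      by (auto simp: g_def inc_fun_eq_iff)
    then have "L (inc_unit x y) = L g + sm (-1) (L (inc_unit x x))"
      using g \<open>x \<le> y\<close> by (simp add: add smult inc_idempotent_def)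
    then show ?thesis using idem[OF g] idem[OF inc_idempotent_unit] by simp
  qed (simp add: idem inc_idempotent_unit)
qed

lemma u_commute: "a \<in> incidence_alg \<Longrightarrow> u * \<phi> a = \<phi> a * u"
  using eq_0_if_eq_0_on_idempotents[where L = "\<lambda>a. u * \<phi> a - \<phi> a * u"]
    image_idempotent_mult_u
  by (simp add: algebra_simps scale_mult_left scale_mult_right scale_right_diff_distrib)

lemma image_in_corner: "a \<in> incidence_alg \<Longrightarrow> bpow u (k - 1) * \<phi> a * bpow u (k - 1) = \<phi> a"
  using eq_0_if_eq_0_on_idempotents[where L = "\<lambda>a. bpow u (k - 1) * \<phi> a * bpow u (k - 1) - \<phi> a"]
    image_idempotent_corner
  by (simp add: algebra_simps scale_mult_left scale_mult_right scale_right_diff_distrib)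

definition jordan_defect :: "('x \<Rightarrow> 'x \<Rightarrow> 'f) \<Rightarrow> ('x \<Rightarrow> 'x \<Rightarrow> 'f) \<Rightarrow> 'b" where
  "jordan_defect a b = \<phi> (inc_mult a b) + \<phi> (inc_mult b a)
     - (\<phi> a * bpow u (k - 2) * \<phi> b + \<phi> b * bpow u (k - 2) * \<phi> a)"

lemma jordan_defect_commute: "jordan_defect a b = jordan_defect b a"
  by (simp add: jordan_defect_def add.commute)

lemma jordan_defect_add_left:
  "f \<in> incidence_alg \<Longrightarrow> g \<in> incidence_alg \<Longrightarrow> b \<in> incidence_alg \<Longrightarrow>
    jordan_defect (inc_add f g) b = jordan_defect f b + jordan_defect g b"
  by (simp add: jordan_defect_def inc_mult_add_left inc_mult_add_right distrib_left distrib_right)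

lemma jordan_defect_smult_left:
  "f \<in> incidence_alg \<Longrightarrow> b \<in> incidence_alg \<Longrightarrow>
    jordan_defect (inc_smult c f) b = sm c (jordan_defect f b)"
  by (simp add: jordan_defect_def inc_mult_smult_left inc_mult_smult_right scale_mult_left
      scale_mult_right scale_right_distrib scale_right_diff_distrib)

lemma jordan_defect_add_right:
  "f \<in> incidence_alg \<Longrightarrow> g \<in> incidence_alg \<Longrightarrow> b \<in> incidence_alg \<Longrightarrow>
    jordan_defect b (inc_add f g) = jordan_defect b f + jordan_defect b g"
  by (simp only: jordan_defect_commute[of b] jordan_defect_add_left)

lemma jordan_defect_smult_right:
  "f \<in> incidence_alg \<Longrightarrow> b \<in> incidence_alg \<Longrightarrow>
    jordan_defect b (inc_smult c f) = sm c (jordan_defect b f)"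
  by (simp only: jordan_defect_commute[of b] jordan_defect_smult_left)

lemmas jordan_defect_bilinear =
  jordan_defect_add_left jordan_defect_add_right jordan_defect_smult_left jordan_defect_smult_right

lemma jordan_defect_idempotent: "inc_idempotent g \<Longrightarrow> jordan_defect g g = 0"
  using image_idempotent_sandwich by (simp add: jordan_defect_def inc_idempotent_def)

lemma jordan_defect_line:
  assumes "f \<in> incidence_alg" "h \<in> incidence_alg"
  shows "jordan_defect (inc_add f (inc_smult c h)) (inc_add f (inc_smult c h))
    = jordan_defect f f + sm c (jordan_defect f h + jordan_defect f h)
      + sm (c * c) (jordan_defect h h)"
proof -
  have ch: "inc_smult c h \<in> incidence_alg" using assms(2) by simp
  have "jordan_defect f (inc_add f (inc_smult c h)) = jordan_defect f f + sm c (jordan_defect f h)"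
    using assms ch by (simp only: jordan_defect_add_right jordan_defect_smult_right)
  moreover have "jordan_defect h (inc_add f (inc_smult c h))
      = jordan_defect f h + sm c (jordan_defect h h)"
    using assms ch by (simp only: jordan_defect_add_right jordan_defect_smult_right
        jordan_defect_commute[of h f])
  ultimately show ?thesis
    using assms ch by (simp add: jordan_defect_add_left jordan_defect_smult_left
        scale_right_distrib add.assoc)
qed

text \<open>Polarization: the quadratic form \<open>jordan_defect a a\<close> vanishes on idempotents, which forces
  the bilinear form to vanish on suitable pairs.\<close>

lemma jordan_defect_eq_0_if_add_idempotent:
  assumes "f \<in> incidence_alg" "h \<in> incidence_alg"
    and "jordan_defect f f = 0" "jordan_defect h h = 0" "inc_idempotent (inc_add f h)"
  shows "jordan_defect f h = 0"
proof (rule eq_0_if_add_self_eq_0[OF two_neq_0])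
  show "jordan_defect f h + jordan_defect f h = 0"
    using jordan_defect_line[OF assms(1,2), of 1] jordan_defect_idempotent[OF assms(5)] assms(3,4)
    by simp
qed

lemma jordan_defect_eq_0_if_idempotent_line:
  assumes "f \<in> incidence_alg" "h \<in> incidence_alg" "jordan_defect f f = 0"
    and "\<And>c. inc_idempotent (inc_add f (inc_smult c h))"
  shows "jordan_defect f h = 0" "jordan_defect h h = 0"
proof -
  define J where "J = jordan_defect f h + jordan_defect f h"
  have line: "sm c J + sm (c * c) (jordan_defect h h) = 0" for c
    using jordan_defect_line[OF assms(1,2), of c] jordan_defect_idempotent[OF assms(4)] assms(3)
    by (simp add: J_def)
  have "jordan_defect h h + jordan_defect h h = (J + jordan_defect h h) + (- J + jordan_defect h h)"
    by (simp add: algebra_simps)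
  also have "\<dots> = 0" using line[of 1] line[of "-1"] by simp
  finally show hh: "jordan_defect h h = 0" by (rule eq_0_if_add_self_eq_0[OF two_neq_0])
  show "jordan_defect f h = 0"
  proof (rule eq_0_if_add_self_eq_0[OF two_neq_0])
    show "jordan_defect f h + jordan_defect f h = 0" using line[of 1] hh by (simp add: J_def)
  qed
qed

lemma jordan_defect_diag_diag: "jordan_defect (inc_unit x x) (inc_unit z z) = 0"
proof (cases "x = z")
  case False
  then show ?thesis
    using jordan_defect_eq_0_if_add_idempotent[OF _ _ _ _ inc_idempotent_units_diag[OF False]]
      jordan_defect_idempotent[OF inc_idempotent_unit] by simp
qed (simp add: jordan_defect_idempotent inc_idempotent_unit)

lemma jordan_defect_diag_unit_row:
  assumes "x < y"
  shows "jordan_defect (inc_unit x x) (inc_unit x y) = 0"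
    "jordan_defect (inc_unit x y) (inc_unit x y) = 0"
  using jordan_defect_eq_0_if_idempotent_line[OF _ _ _ inc_idempotent_unit_row[OF assms]]
    jordan_defect_idempotent[OF inc_idempotent_unit] assms
  by simp_all

lemma jordan_defect_diag_unit_col:
  assumes "x < y"
  shows "jordan_defect (inc_unit y y) (inc_unit x y) = 0"
  using jordan_defect_eq_0_if_idempotent_line[OF _ _ _ inc_idempotent_unit_col[OF assms]]
    jordan_defect_idempotent[OF inc_idempotent_unit] assms
  by simp

lemma jordan_defect_diag_unit_disjoint:
  assumes "x < y" "z \<noteq> x" "z \<noteq> y"
  shows "jordan_defect (inc_unit z z) (inc_unit x y) = 0"
proof -
  have row: "inc_idempotent (inc_add (inc_unit x x) (inc_unit x y) :: 'x \<Rightarrow> 'x \<Rightarrow> 'f)"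
    using inc_idempotent_unit_row[OF assms(1), of 1] by simp
  have "jordan_defect (inc_add (inc_unit x x) (inc_unit x y)) (inc_unit z z) = 0"
    using row jordan_defect_eq_0_if_add_idempotent[OF _ _ jordan_defect_idempotent[OF row]
        jordan_defect_idempotent[OF inc_idempotent_unit] inc_idempotent_row_add_unit[OF assms]]
    by (simp add: inc_idempotent_def)
  then show ?thesis
    using assms jordan_defect_diag_diag[of x z]
    by (simp add: jordan_defect_add_left jordan_defect_commute[of "inc_unit z z"])
qed

lemma jordan_defect_diag_unit:
  assumes "z < t"
  shows "jordan_defect (inc_unit x x) (inc_unit z t) = 0"
  using jordan_defect_diag_unit_row[OF assms] jordan_defect_diag_unit_col[OF assms]
    jordan_defect_diag_unit_disjoint[OF assms]
  by (cases "x = z \<or> x = t") auto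

lemma jordan_defect_units_row:
  assumes "x < y" "x < t" "y \<noteq> t"
  shows "jordan_defect (inc_unit x y) (inc_unit x t) = 0"
proof -
  have row: "inc_idempotent (inc_add (inc_unit x x) (inc_unit x y) :: 'x \<Rightarrow> 'x \<Rightarrow> 'f)"
    using inc_idempotent_unit_row[OF assms(1), of 1] by simp
  have "jordan_defect (inc_add (inc_unit x x) (inc_unit x y)) (inc_unit x t) = 0"
    using jordan_defect_eq_0_if_idempotent_line[OF _ _ jordan_defect_idempotent[OF row]
        inc_idempotent_row_line[OF assms]] row assms by (simp add: inc_idempotent_def)
  then show ?thesis
    using assms jordan_defect_diag_unit[OF assms(2), of x] by (simp add: jordan_defect_add_left)
qed

lemma jordan_defect_units_disjoint:
  assumes "x < y" "z < t" "x \<noteq> z" "y \<noteq> z" "t \<noteq> x"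
  shows "jordan_defect (inc_unit x y) (inc_unit z t) = 0"
proof -
  have rows: "inc_idempotent (inc_add (inc_unit x x) (inc_unit x y) :: 'x \<Rightarrow> 'x \<Rightarrow> 'f)"
      "inc_idempotent (inc_add (inc_unit z z) (inc_unit z t) :: 'x \<Rightarrow> 'x \<Rightarrow> 'f)"
    using inc_idempotent_unit_row[OF assms(1), of 1] inc_idempotent_unit_row[OF assms(2), of 1]
    by simp_all
  have "jordan_defect (inc_add (inc_unit x x) (inc_unit x y))
      (inc_add (inc_unit z z) (inc_unit z t)) = 0"
    using rows jordan_defect_eq_0_if_add_idempotent[OF _ _ jordan_defect_idempotent[OF rows(1)]
        jordan_defect_idempotent[OF rows(2)] inc_idempotent_rows[OF assms]]
    by (simp add: inc_idempotent_def)
  moreover have "jordan_defect (inc_unit x y) (inc_unit z z) = 0"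
    using jordan_defect_diag_unit_disjoint[OF assms(1)] assms
      jordan_defect_commute[of "inc_unit x y" "inc_unit z z"] by simp
  ultimately show ?thesis
    using assms jordan_defect_diag_diag[of x z] jordan_defect_diag_unit[OF assms(2), of x]
    by (simp add: jordan_defect_add_left jordan_defect_add_right)
qed

lemma jordan_defect_units_chain:
  assumes "x < y" "y < t"
  shows "jordan_defect (inc_unit x y) (inc_unit y t) = 0"
proof -
  have row: "inc_idempotent (inc_add (inc_unit y y) (inc_unit y t) :: 'x \<Rightarrow> 'x \<Rightarrow> 'f)"
    using inc_idempotent_unit_row[OF assms(2), of 1] by simp
  have "jordan_defect (inc_add (inc_unit y y) (inc_unit y t))
      (inc_add (inc_unit x y) (inc_unit x t)) = 0"
    using jordan_defect_eq_0_if_idempotent_line[OF _ _ jordan_defect_idempotent[OF row]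
        inc_idempotent_chain_line[OF assms]] row assms
    by (simp add: inc_idempotent_def)
  moreover have "jordan_defect (inc_unit y t) (inc_unit x t) = 0"
    using jordan_defect_units_disjoint[of y t x t] assms by simp
  ultimately show ?thesis
    using assms jordan_defect_diag_unit_col[OF assms(1)] jordan_defect_diag_unit[of x t y]
    by (simp add: jordan_defect_add_left jordan_defect_add_right
        jordan_defect_commute[of "inc_unit y t"])
qed

lemma jordan_defect_units:
  assumes "x \<le> y" "z \<le> t"
  shows "jordan_defect (inc_unit x y) (inc_unit z t) = 0"
proof (cases "x = y")
  case True
  then show ?thesis
    using assms jordan_defect_diag_diag jordan_defect_diag_unit by (cases "z = t") auto
next
  case False
  then have xy: "x < y" using assms by simp
  show ?thesis
  proof (cases "z = t")
    case True
    then show ?thesis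
      using jordan_defect_diag_unit[OF xy] jordan_defect_commute[of "inc_unit x y"] by simp
  next
    case False
    then have zt: "z < t" using assms by simp
    consider "x = z" | "y = z" | "t = x" | "x \<noteq> z" "y \<noteq> z" "t \<noteq> x" by blast
    then show ?thesis
    proof cases
      case 1
      then show ?thesis
        using jordan_defect_diag_unit_row(2)[OF xy] jordan_defect_units_row[OF xy, of t] zt
        by (cases "y = t") auto
    next
      case 2
      then show ?thesis using jordan_defect_units_chain[OF xy] zt by simp
    next
      case 3
      then show ?thesis
        using jordan_defect_units_chain[OF zt] xy jordan_defect_commute[of "inc_unit x y"] by simp
    next
      case 4
      then show ?thesis using jordan_defect_units_disjoint[OF xy zt] by simp
    qed
  qed
qed

lemma jordan_defect_eq_0:
  assumes "a \<in> incidence_alg" "b \<in> incidence_alg"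
  shows "jordan_defect a b = 0"
proof -
  have units: "jordan_defect (inc_unit x y) b = 0" if "x \<le> y" "b \<in> incidence_alg" for x y b
    by (rule inc_linear_eq_0_if_eq_0_on_units[where L = "jordan_defect (inc_unit x y)"])
      (use that in \<open>simp_all add: jordan_defect_bilinear jordan_defect_units\<close>)
  show ?thesis
    by (rule inc_linear_eq_0_if_eq_0_on_units[where L = "\<lambda>a. jordan_defect a b"])
      (use assms units in \<open>simp_all add: jordan_defect_bilinear\<close>)
qed

lemma jordan_square:
  assumes "a \<in> incidence_alg"
  shows "\<phi> (inc_mult a a) = \<phi> a * bpow u (k - 2) * \<phi> a"
proof -
  have "(\<phi> (inc_mult a a) - \<phi> a * bpow u (k - 2) * \<phi> a)
      + (\<phi> (inc_mult a a) - \<phi> a * bpow u (k - 2) * \<phi> a) = 0"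
    using jordan_defect_eq_0[OF assms assms] by (simp add: jordan_defect_def algebra_simps)
  then have "\<phi> (inc_mult a a) - \<phi> a * bpow u (k - 2) * \<phi> a = 0"
    by (rule eq_0_if_add_self_eq_0[OF two_neq_0])
  then show ?thesis by simp
qed

text \<open>The Jordan triple identity follows from the linearized square identity applied to
  \<open>a (ab + ba) + (ab + ba) a = 2 aba + a\<^sup>2 b + b a\<^sup>2\<close>.\<close>

lemma jordan_triple:
  assumes a: "a \<in> incidence_alg" and b: "b \<in> incidence_alg"
  shows "\<phi> (inc_mult (inc_mult a b) a)
    = \<phi> a * bpow u (k - 2) * \<phi> b * bpow u (k - 2) * \<phi> a"
proof -
  let ?v = "bpow u (k - 2)"
  let ?D = "\<phi> (inc_mult (inc_mult a b) a)" and ?T = "\<phi> a * ?v * \<phi> b * ?v * \<phi> a"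
  let ?S = "\<phi> a * ?v * \<phi> a * ?v * \<phi> b + \<phi> b * ?v * (\<phi> a * ?v * \<phi> a)"
  define s where "s = inc_add (inc_mult a b) (inc_mult b a)"
  have s_in: "s \<in> incidence_alg" by (simp add: s_def)
  have phi_s: "\<phi> s = \<phi> a * ?v * \<phi> b + \<phi> b * ?v * \<phi> a"
    using jordan_defect_eq_0[OF a b] by (simp add: jordan_defect_def s_def)
  have "\<phi> (inc_mult a s) + \<phi> (inc_mult s a)
      = ?D + ?D + (\<phi> (inc_mult (inc_mult a a) b) + \<phi> (inc_mult b (inc_mult a a)))"
    by (simp add: s_def inc_mult_add_left inc_mult_add_right inc_mult_assoc add_ac)
  also have "\<phi> (inc_mult (inc_mult a a) b) + \<phi> (inc_mult b (inc_mult a a)) = ?S"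
    using jordan_defect_eq_0[of "inc_mult a a" b] b jordan_square[OF a]
    by (simp add: jordan_defect_def)
  finally have "?D + ?D + ?S = \<phi> a * ?v * \<phi> s + \<phi> s * ?v * \<phi> a"
    using jordan_defect_eq_0[OF a s_in] by (simp add: jordan_defect_def)
  also have "\<dots> = ?T + ?T + ?S"
    unfolding phi_s by (simp add: algebra_simps)
  finally have "(?D - ?T) + (?D - ?T) = 0" by (simp add: algebra_simps)
  then have "?D - ?T = 0" by (rule eq_0_if_add_self_eq_0[OF two_neq_0])
  then show ?thesis by simp
qed

end

theorem lemma7p3:
  fixes k :: nat
    and \<phi> :: "('x::{order,finite} \<Rightarrow> 'x \<Rightarrow> 'f::field) \<Rightarrow> 'b::ring"
    and sm :: "'f \<Rightarrow> 'b \<Rightarrow> 'b"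
  assumes "k \<ge> 3"
    and "\<exists>w::'f. primitive_root_of_unity (k - 1) w"
    and "of_nat k \<noteq> (0::'f)"
    and "F_algebra sm"
    and "\<forall>f\<in>incidence_alg. \<forall>g\<in>incidence_alg. \<phi> (inc_add f g) = \<phi> f + \<phi> g"
    and "\<forall>c. \<forall>f\<in>incidence_alg. \<phi> (inc_smult c f) = sm c (\<phi> f)"
    and "\<phi> ` Pk_inc k \<subseteq> Pk k"
  shows "(\<forall>a\<in>incidence_alg. \<phi> inc_delta * \<phi> a = \<phi> a * \<phi> inc_delta)
       \<and> (\<forall>a\<in>incidence_alg. \<exists>b. \<phi> a = bpow (\<phi> inc_delta) (k - 1) * b * bpow (\<phi> inc_delta) (k - 1))
       \<and> (\<forall>a\<in>incidence_alg.
            \<phi> (inc_mult a a) = \<phi> a * bpow (\<phi> inc_delta) (k - 2) * \<phi> a)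
       \<and> (\<forall>a\<in>incidence_alg. \<forall>b\<in>incidence_alg.
            \<phi> (inc_mult (inc_mult a b) a) =
              \<phi> a * bpow (\<phi> inc_delta) (k - 2) * \<phi> b * bpow (\<phi> inc_delta) (k - 2) * \<phi> a)"
proof -
  obtain w :: 'f where "primitive_root_of_unity (k - 1) w" using assms(2) by blast
  then interpret kpotent_preserver sm k \<phi> w
    by unfold_locales (use assms in auto)
  show ?thesis
    using u_commute image_in_corner[symmetric] jordan_square jordan_triple by blast
qed

end
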